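(* Let $n\ge 1$ be an integer, $x\in(\frac1n,\infty)$, $y\in S^1=\mathbf{R}/2\pi\mathbf{Z}$, and $dA=\frac{1}{|x|}\,dx\,dy$. Consider the operator $$\Delta^n_{ex}=\partial_x^2+x^2\partial_y^2-\frac{1}{x}\partial_x+\frac{(n^4x^4+1)^2}{4x^2(n^4x^4-1)}$$ with domain $C^\infty_0((\frac1n,\infty)\times S^1)$. Then $\Delta^n_{ex}$ is not essentially self-adjoint in $L^2((\frac1n,\infty)\times S^1,dA)$.
   Context: The Grushin cylinder is $\mathbf{R}\times S^1$ with the (generalized) Riemannian metric $\mathrm{diag}(1,1/x^2)$; its area is $dA=\frac{1}{|x|}dx\,dy$, its Laplace–Beltrami operator is $\Delta=\partial_x^2+x^2\partial_y^2-\frac1x\partial_x$, and its Gaussian curvature is $K=-2/x^2$. For $x\ge 1/n$ it is locally isometric to the surface of revolution ("Grushin $n^2$-winded bell") $z_1=\frac{1}{n^2x}\cos(n^2y)$, $z_2=\frac{1}{n^2x}\sin(n^2y)$, $z_3=\frac1n+\frac1n\int_1^{nx}\sqrt{1-s^{-4}}\,ds$, whose mean curvature is $H_n=\frac{n^4x^4-3}{2x\sqrt{n^4x^4-1}}$. The extrinsic Laplacian is $\Delta^n_{ex}=\Delta-K+H_n^2$, which equals the displayed operator. *)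

theory Defs
  imports "HOL-Analysis.Analysis"
begin

text \<open>Points of the cylinder are represented as pairs (x,y) of reals; functions on
  S^1 = R/2piZ are 2pi-periodic in y, and integrals over S^1 are taken over y in [0,2pi).\<close>

definition Omega :: "nat \<Rightarrow> (real \<times> real) set" where
  "Omega n = {1 / real n<..} \<times> {0..<2*pi}"

definition L2 :: "nat \<Rightarrow> (real \<times> real \<Rightarrow> complex) set" where
  "L2 n = {u. u \<in> borel_measurable lborel \<and>
      (\<integral>\<^sup>+ p \<in> Omega n. ennreal ((cmod (u p))\<^sup>2 / \<bar>fst p\<bar>) \<partial>lborel) < \<infinity>}"

definition l2_inner :: "nat \<Rightarrow> (real \<times> real \<Rightarrow> complex) \<Rightarrow> (real \<times> real \<Rightarrow> complex) \<Rightarrow> complex" where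
  "l2_inner n u v = (LINT p:Omega n|lborel. u p * cnj (v p) / complex_of_real \<bar>fst p\<bar>)"

definition l2_dist2 :: "nat \<Rightarrow> (real \<times> real \<Rightarrow> complex) \<Rightarrow> (real \<times> real \<Rightarrow> complex) \<Rightarrow> ennreal" where
  "l2_dist2 n u v = (\<integral>\<^sup>+ p \<in> Omega n. ennreal ((cmod (u p - v p))\<^sup>2 / \<bar>fst p\<bar>) \<partial>lborel)"

definition pdx :: "(real \<times> real \<Rightarrow> complex) \<Rightarrow> real \<times> real \<Rightarrow> complex" where
  "pdx f = (\<lambda>p. vector_derivative (\<lambda>t. f (t, snd p)) (at (fst p)))"

definition pdy :: "(real \<times> real \<Rightarrow> complex) \<Rightarrow> real \<times> real \<Rightarrow> complex" where
  "pdy f = (\<lambda>p. vector_derivative (\<lambda>t. f (fst p, t)) (at (snd p)))"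

text \<open>iterated partial derivative along a word (True = d/dx, False = d/dy)\<close>
fun pd :: "bool list \<Rightarrow> (real \<times> real \<Rightarrow> complex) \<Rightarrow> real \<times> real \<Rightarrow> complex" where
  "pd [] f = f"
| "pd (b # ws) f = (if b then pdx (pd ws f) else pdy (pd ws f))"

definition smooth2 :: "(real \<times> real \<Rightarrow> complex) \<Rightarrow> bool" where
  "smooth2 f = (\<forall>ws p. pd ws f differentiable (at p))"

definition test_fun :: "nat \<Rightarrow> (real \<times> real \<Rightarrow> complex) \<Rightarrow> bool" where
  "test_fun n f = (smooth2 f \<and> (\<forall>x y. f (x, y + 2*pi) = f (x, y)) \<and>
      (\<exists>a b. 1 / real n < a \<and> (\<forall>x y. x \<notin> {a..b} \<longrightarrow> f (x, y) = 0)))"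

definition Vpot :: "nat \<Rightarrow> real \<Rightarrow> real" where
  "Vpot n x = ((real n)^4 * x^4 + 1)\<^sup>2 / (4 * x\<^sup>2 * ((real n)^4 * x^4 - 1))"

definition Dex :: "nat \<Rightarrow> (real \<times> real \<Rightarrow> complex) \<Rightarrow> real \<times> real \<Rightarrow> complex" where
  "Dex n f = (\<lambda>(x, y). pdx (pdx f) (x, y) + complex_of_real (x\<^sup>2) * pdy (pdy f) (x, y)
      - complex_of_real (1 / x) * pdx f (x, y) + complex_of_real (Vpot n x) * f (x, y))"

definition Dex_graph :: "nat \<Rightarrow> ((real \<times> real \<Rightarrow> complex) \<times> (real \<times> real \<Rightarrow> complex)) set" where
  "Dex_graph n = {(f, Dex n f) | f. test_fun n f}"

definition op_closure :: "nat \<Rightarrow> ((real \<times> real \<Rightarrow> complex) \<times> (real \<times> real \<Rightarrow> complex)) set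
    \<Rightarrow> ((real \<times> real \<Rightarrow> complex) \<times> (real \<times> real \<Rightarrow> complex)) set" where
  "op_closure n G = {(u, f). u \<in> L2 n \<and> f \<in> L2 n \<and>
      (\<exists>s. (\<forall>k. s k \<in> G) \<and> ((\<lambda>k. l2_dist2 n (fst (s k)) u) \<longlonglongrightarrow> 0)
                          \<and> ((\<lambda>k. l2_dist2 n (snd (s k)) f) \<longlonglongrightarrow> 0))}"

definition op_adjoint :: "nat \<Rightarrow> ((real \<times> real \<Rightarrow> complex) \<times> (real \<times> real \<Rightarrow> complex)) set
    \<Rightarrow> ((real \<times> real \<Rightarrow> complex) \<times> (real \<times> real \<Rightarrow> complex)) set" where
  "op_adjoint n G = {(v, w). v \<in> L2 n \<and> w \<in> L2 n \<and>
      (\<forall>(u, f) \<in> G. l2_inner n f v = l2_inner n u w)}"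

definition self_adjoint_op :: "nat \<Rightarrow> ((real \<times> real \<Rightarrow> complex) \<times> (real \<times> real \<Rightarrow> complex)) set \<Rightarrow> bool" where
  "self_adjoint_op n G = (op_adjoint n G = G)"

definition essentially_self_adjoint :: "nat \<Rightarrow> ((real \<times> real \<Rightarrow> complex) \<times> (real \<times> real \<Rightarrow> complex)) set \<Rightarrow> bool" where
  "essentially_self_adjoint n G = self_adjoint_op n (op_closure n G)"

end

theory Submission
  imports Defs "HOL-Real_Asymp.Real_Asymp"
begin

text \<open>
  A self-adjoint operator has a real quadratic form, so it suffices to find a pair \<open>(v, w)\<close> in the
  adjoint of the closure with \<open>Im \<langle>w, v\<rangle> \<noteq> 0\<close>. In the variable \<open>s = n x\<close> the operator acts on
  \<open>y\<close>-independent functions as \<open>n\<^sup>2\<close> times \<open>L u = u'' - u'/s + V(s) u\<close>, \<open>V = Vpot 1\<close>, which is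
  formally symmetric for \<open>ds/s\<close>. Since \<open>V(s) \<sim> 1/(4(s - 1))\<close>, the endpoint \<open>s = 1\<close> is a regular
  singular point where both solutions of \<open>L u = 0\<close> are bounded (limit circle). Approximate
  solutions \<open>psiA\<close>, \<open>psiB\<close> damped at infinity give \<open>psi = psiA + i psiB\<close> with \<open>psi, L psi\<close> square
  integrable. Green's formula against test functions, which vanish near \<open>x = 1/n\<close>, puts
  \<open>(Psi n, DexPsi n)\<close> in the adjoint, while \<open>Im \<langle>DexPsi n, Psi n\<rangle>\<close> is \<open>2\<pi> n\<^sup>2\<close> times the
  non-vanishing Wronskian of \<open>psiA\<close> and \<open>psiB\<close> at \<open>s = 1\<close>.
\<close>

section \<open>The weighted space L2 on the half-cylinder\<close>

definition l2_norm2 :: "nat \<Rightarrow> (real \<times> real \<Rightarrow> complex) \<Rightarrow> ennreal" where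
  "l2_norm2 n u = (\<integral>\<^sup>+ p \<in> Omega n. ennreal ((cmod (u p))\<^sup>2 / \<bar>fst p\<bar>) \<partial>lborel)"

lemma L2_iff: "u \<in> L2 n \<longleftrightarrow> u \<in> borel_measurable lborel \<and> l2_norm2 n u < \<infinity>"
  unfolding L2_def l2_norm2_def by simp

lemma l2_dist2_eq_l2_norm2: "l2_dist2 n u v = l2_norm2 n (\<lambda>p. u p - v p)"
  unfolding l2_dist2_def l2_norm2_def ..

lemma sets_Omega [measurable]: "Omega n \<in> sets (lborel \<Otimes>\<^sub>M lborel)"
  unfolding Omega_def by (rule pair_measureI) auto

lemma borel_measurable_cnj [measurable]:
  "f \<in> borel_measurable M \<Longrightarrow> (\<lambda>x. cnj (f x)) \<in> borel_measurable M"
  by (rule measurable_compose[of f M borel, OF _ borel_measurable_continuous_onI]) (auto intro: continuous_intros)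

lemma l2_inner_commute: "l2_inner n v u = cnj (l2_inner n u v)"
proof -
  have "(\<lambda>p. indicator (Omega n) p *\<^sub>R (v p * cnj (u p) / complex_of_real \<bar>fst p\<bar>))
      = (\<lambda>p. cnj (indicator (Omega n) p *\<^sub>R (u p * cnj (v p) / complex_of_real \<bar>fst p\<bar>)))"
    by (auto simp: mult.commute split: split_indicator)
  then show ?thesis
    unfolding l2_inner_def set_lebesgue_integral_def
    by (simp only: Bochner_Integration.integral_cnj)
qed

lemma l2_Cauchy_Schwarz:
  fixes u v :: "real \<times> real \<Rightarrow> complex"
  assumes "u \<in> borel_measurable lborel" "v \<in> borel_measurable lborel"
  shows "(\<integral>\<^sup>+ p \<in> Omega n. ennreal (cmod (u p) * cmod (v p) / \<bar>fst p\<bar>) \<partial>lborel)^2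
           \<le> l2_norm2 n u * l2_norm2 n v"
proof -
  define f where "f w p = ennreal (cmod (w p) / sqrt \<bar>fst p\<bar>) * indicator (Omega n) p"
    for w :: "real \<times> real \<Rightarrow> complex" and p
  have [measurable]: "u \<in> borel_measurable (lborel \<Otimes>\<^sub>M lborel)" "v \<in> borel_measurable (lborel \<Otimes>\<^sub>M lborel)"
    using assms by (simp_all add: lborel_prod)
  have "f u \<in> borel_measurable (lborel \<Otimes>\<^sub>M lborel)" "f v \<in> borel_measurable (lborel \<Otimes>\<^sub>M lborel)"
    unfolding f_def by measurable
  then have [measurable]: "f u \<in> borel_measurable lborel" "f v \<in> borel_measurable lborel"
    by (simp_all add: lborel_prod)
  have "f u p * f v p = ennreal (cmod (u p) * cmod (v p) / \<bar>fst p\<bar>) * indicator (Omega n) p" for p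
    by (auto simp: f_def ennreal_mult''[symmetric] divide_simps split: split_indicator)
  moreover have "f w p ^ 2 = ennreal ((cmod (w p))\<^sup>2 / \<bar>fst p\<bar>) * indicator (Omega n) p" for w p
    by (auto simp: f_def ennreal_power power_divide split: split_indicator)
  ultimately show ?thesis
    using Cauchy_Schwarz_nn_integral[of "f u" lborel "f v"] unfolding l2_norm2_def by simp
qed

lemma l2_inner_integrable_bounded:
  fixes u v :: "real \<times> real \<Rightarrow> complex"
  assumes meas: "u \<in> borel_measurable lborel" "v \<in> borel_measurable lborel"
    and fin: "l2_norm2 n u < \<infinity>" "l2_norm2 n v < \<infinity>"
  shows "set_integrable lborel (Omega n) (\<lambda>p. u p * cnj (v p) / complex_of_real \<bar>fst p\<bar>)"
    and "norm (l2_inner n u v) \<le> sqrt (enn2real (l2_norm2 n u) * enn2real (l2_norm2 n v))"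
proof -
  define I where "I = (\<integral>\<^sup>+ p \<in> Omega n. ennreal (cmod (u p) * cmod (v p) / \<bar>fst p\<bar>) \<partial>lborel)"
  have cs: "I^2 \<le> l2_norm2 n u * l2_norm2 n v"
    unfolding I_def using meas by (rule l2_Cauchy_Schwarz)
  also have "\<dots> < \<infinity>" using fin by (simp add: ennreal_mult_less_top)
  finally have "I < \<infinity>"
    using power_eq_top_ennreal[of I 2] by (auto simp: top.not_eq_extremum)
  have [measurable]: "u \<in> borel_measurable (lborel \<Otimes>\<^sub>M lborel)" "v \<in> borel_measurable (lborel \<Otimes>\<^sub>M lborel)"
    using meas by (simp_all add: lborel_prod)
  have "(\<lambda>p. indicator (Omega n) p *\<^sub>R (u p * cnj (v p) / complex_of_real \<bar>fst p\<bar>))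
      \<in> borel_measurable (lborel \<Otimes>\<^sub>M lborel)"
    by measurable
  then have meas_int: "(\<lambda>p. indicator (Omega n) p *\<^sub>R (u p * cnj (v p) / complex_of_real \<bar>fst p\<bar>))
      \<in> borel_measurable lborel"
    by (simp add: lborel_prod)
  have norm_I: "(\<integral>\<^sup>+ p. ennreal (norm (indicator (Omega n) p *\<^sub>R (u p * cnj (v p) / complex_of_real \<bar>fst p\<bar>))) \<partial>lborel) = I"
    unfolding I_def by (intro nn_integral_cong) (auto split: split_indicator simp: norm_mult norm_divide)
  show int: "set_integrable lborel (Omega n) (\<lambda>p. u p * cnj (v p) / complex_of_real \<bar>fst p\<bar>)"
    unfolding set_integrable_def integrable_iff_bounded using meas_int norm_I \<open>I < \<infinity>\<close> by simp
  have "ennreal (norm (l2_inner n u v)) \<le> I"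
    unfolding l2_inner_def set_lebesgue_integral_def norm_I[symmetric]
    by (rule integral_norm_bound_ennreal) (use int in \<open>simp add: set_integrable_def\<close>)
  then have "ennreal (norm (l2_inner n u v)) ^ 2 \<le> I ^ 2"
    by (rule power_mono) simp
  also note cs
  also have "l2_norm2 n u * l2_norm2 n v = ennreal (enn2real (l2_norm2 n u) * enn2real (l2_norm2 n v))"
    using fin by (simp add: ennreal_mult'' ennreal_enn2real_if less_top)
  finally have "norm (l2_inner n u v) ^ 2 \<le> enn2real (l2_norm2 n u) * enn2real (l2_norm2 n v)"
    by (simp add: ennreal_power)
  then show "norm (l2_inner n u v) \<le> sqrt (enn2real (l2_norm2 n u) * enn2real (l2_norm2 n v))"
    using real_le_rsqrt by blast
qed

lemma l2_inner_add_left: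
  assumes "u \<in> L2 n" "u' \<in> L2 n" "v \<in> L2 n"
  shows "l2_inner n (\<lambda>p. u p + u' p) v = l2_inner n u v + l2_inner n u' v"
proof -
  have "l2_inner n u v + l2_inner n u' v
      = (LINT p:Omega n|lborel. u p * cnj (v p) / complex_of_real \<bar>fst p\<bar> + u' p * cnj (v p) / complex_of_real \<bar>fst p\<bar>)"
    unfolding l2_inner_def using assms
    by (intro set_integral_add(2)[symmetric] l2_inner_integrable_bounded(1)) (auto simp: L2_iff)
  then show ?thesis
    by (simp add: l2_inner_def add_divide_distrib distrib_right)
qed

lemma l2_inner_tendsto:
  assumes u: "u \<in> L2 n" and v: "v \<in> L2 n" and h: "\<And>k. h k \<in> borel_measurable lborel"
    and lim: "(\<lambda>k. l2_dist2 n (h k) u) \<longlonglongrightarrow> 0"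
  shows "(\<lambda>k. l2_inner n (h k) v) \<longlonglongrightarrow> l2_inner n u v"
proof -
  define d where "d k p = h k p - u p" for k p
  have "eventually (\<lambda>k. l2_dist2 n (h k) u < \<infinity>) sequentially"
    using lim by (rule order_tendstoD) simp
  then have "eventually (\<lambda>k. d k \<in> L2 n) sequentially"
    using h u by (auto simp: L2_iff d_def[abs_def] l2_dist2_eq_l2_norm2 elim!: eventually_mono)
  then have "eventually (\<lambda>k. norm (l2_inner n (h k) v - l2_inner n u v)
      \<le> sqrt (enn2real (l2_dist2 n (h k) u) * enn2real (l2_norm2 n v))) sequentially"
  proof eventually_elim
    case (elim k)
    have "h k = (\<lambda>p. d k p + u p)"
      by (simp add: d_def)
    then have "l2_inner n (h k) v - l2_inner n u v = l2_inner n (d k) v"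
      using l2_inner_add_left[OF elim u v] by simp
    then show ?case
      using l2_inner_integrable_bounded(2)[of "d k" v n] elim v
      by (simp add: L2_iff l2_dist2_eq_l2_norm2 d_def[abs_def])
  qed
  moreover have "(\<lambda>k. enn2real (l2_dist2 n (h k) u)) \<longlonglongrightarrow> 0"
    using tendsto_enn2real[of "\<lambda>k. l2_dist2 n (h k) u" 0 sequentially] lim by simp
  then have "(\<lambda>k. sqrt (enn2real (l2_dist2 n (h k) u) * enn2real (l2_norm2 n v))) \<longlonglongrightarrow> 0"
    using tendsto_real_sqrt[OF tendsto_mult_left_zero] by fastforce
  ultimately have "(\<lambda>k. l2_inner n (h k) v - l2_inner n u v) \<longlonglongrightarrow> 0"
    by (rule Lim_null_comparison)
  then show ?thesis
    by (rule LIM_zero_cancel)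
qed

lemma op_adjoint_subset_op_adjoint_closure:
  assumes meas: "\<And>u f. (u, f) \<in> G \<Longrightarrow> u \<in> borel_measurable lborel \<and> f \<in> borel_measurable lborel"
  shows "op_adjoint n G \<subseteq> op_adjoint n (op_closure n G)"
proof safe
  fix v w assume "(v, w) \<in> op_adjoint n G"
  then have v: "v \<in> L2 n" and w: "w \<in> L2 n" and adj: "\<And>u f. (u, f) \<in> G \<Longrightarrow> l2_inner n f v = l2_inner n u w"
    unfolding op_adjoint_def by auto
  have "l2_inner n f v = l2_inner n u w" if "(u, f) \<in> op_closure n G" for u f
  proof -
    from that obtain s where u: "u \<in> L2 n" and f: "f \<in> L2 n" and s: "\<And>k. s k \<in> G"
      and lim_u: "(\<lambda>k. l2_dist2 n (fst (s k)) u) \<longlonglongrightarrow> 0"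
      and lim_f: "(\<lambda>k. l2_dist2 n (snd (s k)) f) \<longlonglongrightarrow> 0"
      unfolding op_closure_def by blast
    have "(\<lambda>k. l2_inner n (snd (s k)) v) \<longlonglongrightarrow> l2_inner n f v"
      using meas[of "fst (s k)" "snd (s k)" for k] s by (intro l2_inner_tendsto[OF f v _ lim_f]) auto
    moreover have "(\<lambda>k. l2_inner n (fst (s k)) w) \<longlonglongrightarrow> l2_inner n u w"
      using meas[of "fst (s k)" "snd (s k)" for k] s by (intro l2_inner_tendsto[OF u w _ lim_u]) auto
    moreover have "l2_inner n (snd (s k)) v = l2_inner n (fst (s k)) w" for k
      using adj[of "fst (s k)" "snd (s k)"] s[of k] by simp
    ultimately show ?thesis
      using LIMSEQ_unique by auto
  qed
  then show "(v, w) \<in> op_adjoint n (op_closure n G)"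
    using v w unfolding op_adjoint_def by auto
qed

lemma self_adjoint_op_inner_real:
  assumes "self_adjoint_op n A" and "(v, w) \<in> A"
  shows "Im (l2_inner n w v) = 0"
proof -
  have "(v, w) \<in> op_adjoint n A"
    using assms unfolding self_adjoint_op_def by simp
  then have "l2_inner n w v = l2_inner n v w"
    using assms(2) unfolding op_adjoint_def by blast
  also have "\<dots> = cnj (l2_inner n w v)"
    by (rule l2_inner_commute)
  finally show ?thesis
    by (metis cnj.sel(2) neg_equal_zero)
qed

section \<open>Radial functions\<close>

lemma set_integral_Omega_fst:
  fixes f :: "real \<Rightarrow> 'a::{banach, second_countable_topology}"
  assumes int: "set_integrable lborel {1 / real n<..} f"
  shows "set_integrable lborel (Omega n) (\<lambda>p. f (fst p))"
    and "(LINT p:Omega n|lborel. f (fst p)) = (2 * pi) *\<^sub>R (LINT x:{1 / real n<..}|lborel. f x)"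
proof -
  define g where "g x = indicator {1 / real n<..} x *\<^sub>R f x" for x
  have g_int: "integrable lborel g"
    using int unfolding set_integrable_def g_def .
  then have [measurable]: "g \<in> borel_measurable borel"
    by (simp add: borel_measurable_integrable)
  have split: "indicator (Omega n) p *\<^sub>R f (fst p) = indicator {0..<2*pi} (snd p) *\<^sub>R g (fst p)" for p
    by (cases p) (auto simp: Omega_def g_def split: split_indicator)
  have "(\<integral>\<^sup>+ p. ennreal (norm (indicator {0..<2*pi} (snd p) *\<^sub>R g (fst p))) \<partial>(lborel \<Otimes>\<^sub>M lborel))
      = (\<integral>\<^sup>+ x. \<integral>\<^sup>+ y. ennreal (norm (g x)) * indicator {0..<2*pi} y \<partial>lborel \<partial>lborel)"
    by (subst lborel.nn_integral_fst[symmetric]) (auto intro!: nn_integral_cong split: split_indicator)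
  also have "\<dots> = (\<integral>\<^sup>+ x. ennreal (norm (g x)) \<partial>lborel) * ennreal (2 * pi)"
    by (simp add: nn_integral_cmult_indicator nn_integral_multc)
  also have "\<dots> < \<infinity>"
    using g_int by (simp add: integrable_iff_bounded ennreal_mult_less_top)
  finally have prod_int: "integrable (lborel \<Otimes>\<^sub>M lborel) (\<lambda>p. indicator {0..<2*pi} (snd p) *\<^sub>R g (fst p))"
    by (subst integrable_iff_bounded) auto
  then show "set_integrable lborel (Omega n) (\<lambda>p. f (fst p))"
    unfolding set_integrable_def split by (simp add: lborel_prod)
  have "(LINT p:Omega n|lborel. f (fst p)) = (\<integral>x. \<integral>y. indicator {0..<2*pi} y *\<^sub>R g x \<partial>lborel \<partial>lborel)"
    using lborel_pair.integral_fst'[OF prod_int]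
    unfolding set_lebesgue_integral_def split by (simp add: lborel_prod)
  also have "\<dots> = (\<integral>x. (2 * pi) *\<^sub>R g x \<partial>lborel)"
    by simp
  also have "\<dots> = (2 * pi) *\<^sub>R (LINT x:{1 / real n<..}|lborel. f x)"
    unfolding set_lebesgue_integral_def g_def by (rule integral_scaleR_right)
  finally show "(LINT p:Omega n|lborel. f (fst p)) = (2 * pi) *\<^sub>R (LINT x:{1 / real n<..}|lborel. f x)" .
qed

lemma set_integral_greaterThan_dilate:
  fixes H :: "real \<Rightarrow> 'a::{banach, second_countable_topology}"
  assumes c: "c > 0" and int: "set_integrable lborel {1<..} (\<lambda>s. inverse s *\<^sub>R H s)"
  shows "set_integrable lborel {1 / c<..} (\<lambda>x. inverse x *\<^sub>R H (c * x))"
    and "(LINT x:{1 / c<..}|lborel. inverse x *\<^sub>R H (c * x)) = (LINT s:{1<..}|lborel. inverse s *\<^sub>R H s)"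
proof -
  define h where "h s = indicator {1<..} s *\<^sub>R (inverse s *\<^sub>R H s)" for s
  have h_dilate: "indicator {1 / c<..} x *\<^sub>R (inverse x *\<^sub>R H (c * x)) = c *\<^sub>R h (0 + c * x)" for x
    using c by (auto simp: h_def field_simps split: split_indicator)
  have "integrable lborel h"
    using int unfolding set_integrable_def h_def .
  then have "integrable lborel (\<lambda>x. h (0 + c * x))"
    using c by (subst lborel_integrable_real_affine_iff) auto
  then show "set_integrable lborel {1 / c<..} (\<lambda>x. inverse x *\<^sub>R H (c * x))"
    unfolding set_integrable_def h_dilate by simp
  have "(LINT x:{1 / c<..}|lborel. inverse x *\<^sub>R H (c * x)) = (\<integral>x. c *\<^sub>R h (0 + c * x) \<partial>lborel)"
    unfolding set_lebesgue_integral_def h_dilate ..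
  also have "\<dots> = c *\<^sub>R (\<integral>x. h (0 + c * x) \<partial>lborel)"
    by (rule integral_scaleR_right)
  also have "\<dots> = (\<integral>s. h s \<partial>lborel)"
    using lborel_integral_real_affine[of c h 0] c by simp
  finally show "(LINT x:{1 / c<..}|lborel. inverse x *\<^sub>R H (c * x)) = (LINT s:{1<..}|lborel. inverse s *\<^sub>R H s)"
    by (simp add: set_lebesgue_integral_def h_def)
qed

lemma set_integral_Omega_radial:
  fixes H :: "real \<Rightarrow> 'a::{banach, second_countable_topology}"
  assumes n: "n \<ge> 1" and int: "set_integrable lborel {1<..} (\<lambda>s. inverse s *\<^sub>R H s)"
  shows "set_integrable lborel (Omega n) (\<lambda>p. inverse \<bar>fst p\<bar> *\<^sub>R H (real n * fst p))"
    and "(LINT p:Omega n|lborel. inverse \<bar>fst p\<bar> *\<^sub>R H (real n * fst p))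
           = (2 * pi) *\<^sub>R (LINT s:{1<..}|lborel. inverse s *\<^sub>R H s)"
proof -
  have pos: "real n > 0" using n by simp
  have eq: "inverse \<bar>x\<bar> *\<^sub>R H (real n * x) = inverse x *\<^sub>R H (real n * x)" if "x \<in> {1 / real n<..}" for x
  proof -
    have "x > 0" using that pos by (auto intro: less_trans[of 0 "1 / real n"])
    then show ?thesis by simp
  qed
  have int_x: "set_integrable lborel {1 / real n<..} (\<lambda>x. inverse \<bar>x\<bar> *\<^sub>R H (real n * x))"
    using set_integral_greaterThan_dilate(1)[OF pos int] by (subst set_integrable_cong[OF refl refl eq]) auto
  show "set_integrable lborel (Omega n) (\<lambda>p. inverse \<bar>fst p\<bar> *\<^sub>R H (real n * fst p))"
    using set_integral_Omega_fst(1)[OF int_x] by simp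
  have "(LINT x:{1 / real n<..}|lborel. inverse \<bar>x\<bar> *\<^sub>R H (real n * x))
      = (LINT x:{1 / real n<..}|lborel. inverse x *\<^sub>R H (real n * x))"
    by (rule set_lebesgue_integral_cong) (use eq in auto)
  then show "(LINT p:Omega n|lborel. inverse \<bar>fst p\<bar> *\<^sub>R H (real n * fst p))
           = (2 * pi) *\<^sub>R (LINT s:{1<..}|lborel. inverse s *\<^sub>R H s)"
    using set_integral_Omega_fst(2)[OF int_x] set_integral_greaterThan_dilate(2)[OF pos int] by simp
qed

lemma divide_of_real_eq_scaleR: "z / complex_of_real t = inverse t *\<^sub>R z"
  by (simp add: scaleR_conv_of_real divide_inverse mult.commute of_real_inverse)

lemma complex_of_real_set_integrable_eq:
  "complex_set_integrable M A (\<lambda>x. complex_of_real (f x)) \<longleftrightarrow> set_integrable M A f"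
proof -
  have "(\<lambda>x. indicator A x *\<^sub>R complex_of_real (f x)) = (\<lambda>x. complex_of_real (indicator A x *\<^sub>R f x))"
    by (auto split: split_indicator)
  then show ?thesis
    unfolding set_integrable_def by (simp only: complex_of_real_integrable_eq)
qed

lemma radial_in_L2:
  fixes \<phi> :: "real \<Rightarrow> complex"
  assumes n: "n \<ge> 1" and [measurable]: "\<phi> \<in> borel_measurable borel"
    and int: "set_integrable lborel {1<..} (\<lambda>s. (cmod (\<phi> s))\<^sup>2 / s)"
  shows "(\<lambda>p. \<phi> (real n * fst p)) \<in> L2 n"
proof -
  have "set_integrable lborel (Omega n) (\<lambda>p. inverse \<bar>fst p\<bar> *\<^sub>R (cmod (\<phi> (real n * fst p)))\<^sup>2)"
    using int by (intro set_integral_Omega_radial(1)[OF n]) (simp add: divide_inverse mult.commute)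
  then have "(\<integral>\<^sup>+ p. ennreal (norm (indicator (Omega n) p *\<^sub>R (inverse \<bar>fst p\<bar> *\<^sub>R (cmod (\<phi> (real n * fst p)))\<^sup>2))) \<partial>lborel) < \<infinity>"
    unfolding set_integrable_def integrable_iff_bounded by simp
  moreover have "(\<integral>\<^sup>+ p. ennreal (norm (indicator (Omega n) p *\<^sub>R (inverse \<bar>fst p\<bar> *\<^sub>R (cmod (\<phi> (real n * fst p)))\<^sup>2))) \<partial>lborel)
      = l2_norm2 n (\<lambda>p. \<phi> (real n * fst p))"
    unfolding l2_norm2_def by (intro nn_integral_cong) (auto simp: divide_inverse mult.commute split: split_indicator)
  moreover have "(\<lambda>p. \<phi> (real n * fst p)) \<in> borel_measurable (lborel \<Otimes>\<^sub>M lborel)"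
    by measurable
  ultimately show ?thesis
    by (simp add: L2_iff lborel_prod)
qed

lemma l2_inner_radial:
  fixes \<phi> \<psi> :: "real \<Rightarrow> complex"
  assumes n: "n \<ge> 1" and int: "set_integrable lborel {1<..} (\<lambda>s. \<phi> s * cnj (\<psi> s) / complex_of_real s)"
  shows "l2_inner n (\<lambda>p. \<phi> (real n * fst p)) (\<lambda>p. \<psi> (real n * fst p))
           = complex_of_real (2 * pi) * (LINT s:{1<..}|lborel. \<phi> s * cnj (\<psi> s) / complex_of_real s)"
  using set_integral_Omega_radial(2)[OF n, of "\<lambda>s. \<phi> s * cnj (\<psi> s)"] int
  by (simp add: l2_inner_def divide_of_real_eq_scaleR scaleR_conv_of_real)

section \<open>Integrability on (1, infinity) and the Lagrange identity\<close>

lemma continuous_on_greaterThan_bounded: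
  fixes k :: "real \<Rightarrow> real"
  assumes cont: "continuous_on {a<..} k"
    and lim_a: "(k \<longlongrightarrow> l) (at_right a)" and lim_top: "(k \<longlongrightarrow> l') at_top"
  shows "\<exists>M. \<forall>s>a. \<bar>k s\<bar> \<le> M"
proof -
  obtain b where b: "b > a" "\<And>s. a < s \<Longrightarrow> s < b \<Longrightarrow> dist (k s) l < 1"
    using lim_a[unfolded tendsto_iff, rule_format, of 1] by (auto simp: eventually_at_right_field)
  obtain X where X: "\<And>s. s \<ge> X \<Longrightarrow> dist (k s) l' < 1"
    using lim_top[unfolded tendsto_iff, rule_format, of 1] by (auto simp: eventually_at_top_linorder)
  define c where "c = (a + b) / 2"
  have c: "a < c" "c < b" using b by (auto simp: c_def)
  have "continuous_on {c..max c X} k"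
    using c by (intro continuous_on_subset[OF cont]) auto
  then obtain B where B: "\<And>s. s \<in> {c..max c X} \<Longrightarrow> norm (k s) \<le> B"
    using continuous_on_compact_bound[of "{c..max c X}" k] by auto
  have "\<bar>k s\<bar> \<le> max (\<bar>l\<bar> + 1) (max B (\<bar>l'\<bar> + 1))" if "s > a" for s
  proof -
    consider "s < c" | "s \<in> {c..max c X}" | "s > max c X" by fastforce
    then show ?thesis
    proof cases
      case 1 then show ?thesis using b(2)[of s] that c by (auto simp: dist_real_def)
    next
      case 2 then show ?thesis using B[of s] by auto
    next
      case 3 then show ?thesis using X[of s] by (auto simp: dist_real_def)
    qed
  qed
  then show ?thesis by blast
qed

lemma set_integrable_greaterThan_1_weight:
  "set_integrable lborel {1<..} (\<lambda>s::real. 1 / (sqrt (s - 1) * s))"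
proof -
  have "set_integrable lborel (einterval 1 \<infinity>) (\<lambda>s::real. 1 / (sqrt (s - 1) * s))"
  proof (rule interval_integral_FTC_nonneg(1)[where F = "\<lambda>s. 2 * arctan (sqrt (s - 1))" and A = 0 and B = pi])
    fix x :: real assume "1 < ereal x" "ereal x < \<infinity>"
    then have "x > 1" by simp
    then show "((\<lambda>s. 2 * arctan (sqrt (s - 1))) has_real_derivative 1 / (sqrt (x - 1) * x)) (at x)"
      "isCont (\<lambda>s. 1 / (sqrt (s - 1) * s)) x"
      by (auto intro!: derivative_eq_intros continuous_intros simp: field_simps)
  next
    have "((\<lambda>s. 2 * arctan (sqrt (s - 1))) \<longlongrightarrow> 0) (at_right 1)"
      by real_asymp
    then show "(((\<lambda>s. 2 * arctan (sqrt (s - 1))) \<circ> real_of_ereal) \<longlongrightarrow> 0) (at_right 1)"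
      by (metis ereal_tendsto_simps1(2) one_ereal_def)
    have "((\<lambda>s. 2 * arctan (sqrt (s - 1))) \<longlongrightarrow> pi) at_top"
      by real_asymp
    then show "(((\<lambda>s. 2 * arctan (sqrt (s - 1))) \<circ> real_of_ereal) \<longlongrightarrow> pi) (at_left \<infinity>)"
      by (simp add: ereal_tendsto_simps1(3))
  qed (auto intro!: AE_I2)
  moreover have "einterval 1 \<infinity> = {1::real<..}"
    by (auto simp: einterval_def)
  ultimately show ?thesis by simp
qed

lemma set_integrable_greaterThan_1_if_decay:
  fixes f :: "real \<Rightarrow> real"
  assumes cont: "continuous_on {1<..} f"
    and lim_1: "((\<lambda>s. f s * sqrt (s - 1) * s) \<longlongrightarrow> 0) (at_right 1)"
    and lim_top: "((\<lambda>s. f s * sqrt (s - 1) * s) \<longlongrightarrow> 0) at_top"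
  shows "set_integrable lborel {1<..} f"
proof -
  have "continuous_on {1<..} (\<lambda>s. f s * sqrt (s - 1) * s)"
    by (intro continuous_intros cont)
  then obtain M where M: "\<And>s. s > 1 \<Longrightarrow> \<bar>f s * sqrt (s - 1) * s\<bar> \<le> M"
    using continuous_on_greaterThan_bounded[OF _ lim_1 lim_top] by blast
  show ?thesis
  proof (rule set_integrable_bound[OF set_integrable_mult_right[OF set_integrable_greaterThan_1_weight, of M]])
    show "set_borel_measurable lborel {1<..} f"
      unfolding set_borel_measurable_def using borel_measurable_continuous_on_indicator[OF _ cont] by simp
    have "norm (f s) \<le> norm (M * (1 / (sqrt (s - 1) * s)))" if "s > 1" for s
    proof -
      have "\<bar>f s\<bar> * (sqrt (s - 1) * s) \<le> M"
        using M[OF that] that by (simp add: abs_mult mult.assoc)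
      then show ?thesis
        using that by (simp add: field_simps)
    qed
    then show "AE s in lborel. s \<in> {1<..} \<longrightarrow> norm (f s) \<le> norm (M * (1 / (sqrt (s - 1) * s)))"
      by (intro AE_I2) auto
  qed
qed

lemma lagrange_identity_has_vector_derivative:
  fixes u u' \<phi> \<phi>' :: "real \<Rightarrow> 'a::real_normed_field" and u'' \<phi>'' V :: 'a
  assumes u: "(u has_vector_derivative u' t) (at t)" "(u' has_vector_derivative u'') (at t)"
    and \<phi>: "(\<phi> has_vector_derivative \<phi>' t) (at t)" "(\<phi>' has_vector_derivative \<phi>'') (at t)"
    and t: "t \<noteq> 0"
  shows "((\<lambda>t. (u' t * \<phi> t - u t * \<phi>' t) / of_real t) has_vector_derivative
      ((u'' - u' t / of_real t + V * u t) * \<phi> t - u t * (\<phi>'' - \<phi>' t / of_real t + V * \<phi> t)) / of_real t) (at t)"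
proof -
  have "((\<lambda>t. 1 / t) has_real_derivative - 1 / t\<^sup>2) (at t)"
    using t by (auto intro!: derivative_eq_intros simp: power2_eq_square)
  then have "((\<lambda>t. of_real (1 / t) :: 'a) has_vector_derivative of_real (- 1 / t\<^sup>2)) (at t)"
    by (rule has_vector_derivative_of_real)
  then have "((\<lambda>t. of_real (1 / t) * (u' t * \<phi> t - u t * \<phi>' t)) has_vector_derivative
      of_real (1 / t) * ((u' t * \<phi>' t + u'' * \<phi> t) - (u t * \<phi>'' + u' t * \<phi>' t))
        + of_real (- 1 / t\<^sup>2) * (u' t * \<phi> t - u t * \<phi>' t)) (at t)"
    by (intro has_vector_derivative_mult has_vector_derivative_diff u \<phi>)
  moreover have "of_real (1 / t) * ((u' t * \<phi>' t + u'' * \<phi> t) - (u t * \<phi>'' + u' t * \<phi>' t))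
        + of_real (- 1 / t\<^sup>2) * (u' t * \<phi> t - u t * \<phi>' t)
      = ((u'' - u' t / of_real t + V * u t) * \<phi> t - u t * (\<phi>'' - \<phi>' t / of_real t + V * \<phi> t)) / of_real t"
  proof -
    have T: "(of_real t :: 'a) \<noteq> 0" using t by simp
    have "of_real (1 / t) = 1 / (of_real t :: 'a)" "of_real (- 1 / t\<^sup>2) = - 1 / (of_real t :: 'a)\<^sup>2"
      by (simp_all add: of_real_divide)
    then show ?thesis
      using T by (simp add: field_simps power2_eq_square)
  qed
  moreover have "(\<lambda>t. of_real (1 / t) * (u' t * \<phi> t - u t * \<phi>' t)) = (\<lambda>t. (u' t * \<phi> t - u t * \<phi>' t) / of_real t)"
    by (simp add: of_real_divide)
  ultimately show ?thesis
    by simp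
qed

lemma lagrange_form_has_integral_0:
  fixes u u' u'' \<phi> \<phi>' \<phi>'' V :: "real \<Rightarrow> 'a::{real_normed_field, banach}"
  assumes ab: "a \<le> b" "0 \<notin> {a..b}"
    and u: "\<And>t. t \<in> {a..b} \<Longrightarrow> (u has_vector_derivative u' t) (at t)"
      "\<And>t. t \<in> {a..b} \<Longrightarrow> (u' has_vector_derivative u'' t) (at t)"
    and \<phi>: "\<And>t. t \<in> {a..b} \<Longrightarrow> (\<phi> has_vector_derivative \<phi>' t) (at t)"
      "\<And>t. t \<in> {a..b} \<Longrightarrow> (\<phi>' has_vector_derivative \<phi>'' t) (at t)"
    and ends: "u a = 0" "u' a = 0" "u b = 0" "u' b = 0"
  shows "((\<lambda>t. ((u'' t - u' t / of_real t + V t * u t) * \<phi> t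
      - u t * (\<phi>'' t - \<phi>' t / of_real t + V t * \<phi> t)) / of_real t) has_integral 0) {a..b}"
proof -
  define W where "W = (\<lambda>t. (u' t * \<phi> t - u t * \<phi>' t) / of_real t)"
  have "((\<lambda>t. ((u'' t - u' t / of_real t + V t * u t) * \<phi> t
      - u t * (\<phi>'' t - \<phi>' t / of_real t + V t * \<phi> t)) / of_real t) has_integral W b - W a) {a..b}"
  proof (rule fundamental_theorem_of_calculus[OF ab(1)])
    fix t assume t: "t \<in> {a..b}"
    then have "t \<noteq> 0" using ab(2) by auto
    from lagrange_identity_has_vector_derivative[OF u(1)[OF t] u(2)[OF t] \<phi>(1)[OF t] \<phi>(2)[OF t] this]
    show "(W has_vector_derivative ((u'' t - u' t / of_real t + V t * u t) * \<phi> t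
      - u t * (\<phi>'' t - \<phi>' t / of_real t + V t * \<phi> t)) / of_real t) (at t within {a..b})"
      unfolding W_def by (rule has_vector_derivative_at_within)
  qed
  then show ?thesis
    using ends by (simp add: W_def)
qed

lemma has_vector_derivative_cnj_dilate:
  fixes f :: "real \<Rightarrow> complex"
  assumes "(f has_vector_derivative f') (at (c * t))"
  shows "((\<lambda>t. cnj (f (c * t))) has_vector_derivative complex_of_real c * cnj f') (at t)"
proof -
  have "((\<lambda>t. c * t) has_vector_derivative c) (at t)"
    by (auto intro!: derivative_eq_intros)
  from vector_diff_chain_at[OF this assms] have "((\<lambda>t. f (c * t)) has_vector_derivative c *\<^sub>R f') (at t)"
    by (simp add: o_def)
  from has_vector_derivative_cnj[OF this] show ?thesis
    by (simp add: scaleR_conv_of_real)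
qed

section \<open>The deficiency profile\<close>

text \<open>The two Frobenius solutions of \<open>L u = 0\<close> at \<open>s = 1\<close>, to first order, times \<open>exp (- s)\<close>.\<close>

definition psiA :: "real \<Rightarrow> real" where
  "psiA s = (1 - (s - 1) * (ln (s - 1) - 1) / 4) * exp (- s)"
definition psiA' :: "real \<Rightarrow> real" where
  "psiA' s = (- ln (s - 1) / 4 - 1 + (s - 1) * (ln (s - 1) - 1) / 4) * exp (- s)"
definition psiA'' :: "real \<Rightarrow> real" where
  "psiA'' s = (- 1 / (4 * (s - 1)) + ln (s - 1) / 2 + 1 - (s - 1) * (ln (s - 1) - 1) / 4) * exp (- s)"

definition psiB :: "real \<Rightarrow> real" where "psiB s = (s - 1) * exp (- s)"
definition psiB' :: "real \<Rightarrow> real" where "psiB' s = (2 - s) * exp (- s)"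
definition psiB'' :: "real \<Rightarrow> real" where "psiB'' s = (s - 3) * exp (- s)"

definition LpsiA :: "real \<Rightarrow> real" where "LpsiA s = psiA'' s - psiA' s / s + Vpot 1 s * psiA s"
definition LpsiB :: "real \<Rightarrow> real" where "LpsiB s = psiB'' s - psiB' s / s + Vpot 1 s * psiB s"

lemmas psi_defs = psiA_def psiA'_def psiA''_def psiB_def psiB'_def psiB''_def LpsiA_def LpsiB_def Vpot_def

lemma psiA_has_real_derivative: "s > 1 \<Longrightarrow> (psiA has_real_derivative psiA' s) (at s)"
  unfolding psiA_def psiA'_def by (auto intro!: derivative_eq_intros) (simp add: algebra_simps)

lemma psiA'_has_real_derivative: "s > 1 \<Longrightarrow> (psiA' has_real_derivative psiA'' s) (at s)"
  unfolding psiA'_def psiA''_def by (auto intro!: derivative_eq_intros) (simp add: field_simps)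

lemma psiB_has_real_derivative: "(psiB has_real_derivative psiB' s) (at s)"
  unfolding psiB_def psiB'_def by (auto intro!: derivative_eq_intros simp: field_simps)

lemma psiB'_has_real_derivative: "(psiB' has_real_derivative psiB'' s) (at s)"
  unfolding psiB'_def psiB''_def by (auto intro!: derivative_eq_intros simp: field_simps)

lemma continuous_on_Vpot_1: "continuous_on {1<..} (Vpot 1)"
proof -
  have "s ^ 4 \<noteq> 1" if "s > 1" for s :: real
    using one_less_power[OF that, of 4] by simp
  then show ?thesis
    unfolding Vpot_def by (auto intro!: continuous_intros)
qed

lemma Vpot_dilate:
  assumes "n > 0" shows "Vpot n x = (real n)\<^sup>2 * Vpot 1 (real n * x)"
proof -
  define N where "N = ((real n) ^ 4 * x ^ 4 + 1)\<^sup>2"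
  define D where "D = 4 * x\<^sup>2 * ((real n) ^ 4 * x ^ 4 - 1)"
  have "Vpot 1 (real n * x) = N / ((real n)\<^sup>2 * D)"
    unfolding Vpot_def N_def D_def by (simp add: power_mult_distrib algebra_simps)
  moreover have "Vpot n x = N / D"
    unfolding Vpot_def N_def D_def ..
  moreover have "(real n)\<^sup>2 * (N / ((real n)\<^sup>2 * D)) = N / D"
    using assms by (cases "D = 0") (simp_all add: field_simps)
  ultimately show ?thesis
    by simp
qed

lemma continuous_on_psi:
  "continuous_on {1<..} psiA" "continuous_on {1<..} psiA'" "continuous_on {1<..} psiA''"
  "continuous_on {1<..} psiB" "continuous_on {1<..} psiB'" "continuous_on {1<..} psiB''"
  unfolding psiA_def psiA'_def psiA''_def psiB_def psiB'_def psiB''_def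
  by (auto intro!: continuous_intros)

lemma continuous_on_Lpsi: "continuous_on {1<..} LpsiA" "continuous_on {1<..} LpsiB"
  unfolding LpsiA_def LpsiB_def
  by (intro continuous_intros continuous_on_Vpot_1 continuous_on_psi; force)+

lemma set_integrable_psi_norm: "set_integrable lborel {1<..} (\<lambda>s. (psiA s ^ 2 + psiB s ^ 2) / s)"
proof (rule set_integrable_greaterThan_1_if_decay)
  show "continuous_on {1<..} (\<lambda>s. (psiA s ^ 2 + psiB s ^ 2) / s)"
    using continuous_on_psi by (auto intro!: continuous_intros)
qed (unfold psi_defs; real_asymp)+

lemma set_integrable_Lpsi_norm: "set_integrable lborel {1<..} (\<lambda>s. (LpsiA s ^ 2 + LpsiB s ^ 2) / s)"
proof (rule set_integrable_greaterThan_1_if_decay)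
  show "continuous_on {1<..} (\<lambda>s. (LpsiA s ^ 2 + LpsiB s ^ 2) / s)"
    using continuous_on_Lpsi by (auto intro!: continuous_intros)
qed (unfold psi_defs; real_asymp)+

lemma set_integrable_Lpsi_psi_Re: "set_integrable lborel {1<..} (\<lambda>s. (LpsiA s * psiA s + LpsiB s * psiB s) / s)"
proof (rule set_integrable_greaterThan_1_if_decay)
  show "continuous_on {1<..} (\<lambda>s. (LpsiA s * psiA s + LpsiB s * psiB s) / s)"
    using continuous_on_psi continuous_on_Lpsi by (auto intro!: continuous_intros)
qed (unfold psi_defs; real_asymp)+

lemma set_integrable_Lpsi_psi_Im: "set_integrable lborel {1<..} (\<lambda>s. (psiA s * LpsiB s - psiB s * LpsiA s) / s)"
proof (rule set_integrable_greaterThan_1_if_decay)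
  show "continuous_on {1<..} (\<lambda>s. (psiA s * LpsiB s - psiB s * LpsiA s) / s)"
    using continuous_on_psi continuous_on_Lpsi by (auto intro!: continuous_intros)
qed (unfold psi_defs; real_asymp)+

lemma wronskian_psi_integral:
  "(LINT s:{1<..}|lborel. (psiA s * LpsiB s - psiB s * LpsiA s) / s) = - exp (- 2)"
proof -
  define W where "W s = (psiB' s * psiA s - psiB s * psiA' s) / s" for s
  have "(LBINT s=ereal 1..\<infinity>. (psiA s * LpsiB s - psiB s * LpsiA s) / s) = 0 - exp (- 2)"
  proof (rule interval_integral_FTC_integrable[where F = W])
    fix s :: real assume "ereal 1 < ereal s" "ereal s < \<infinity>"
    then have s: "s > 1" by simp
    have "(W has_vector_derivative
        ((psiB'' s - psiB' s / s + Vpot 1 s * psiB s) * psiA s - psiB s * (psiA'' s - psiA' s / s + Vpot 1 s * psiA s)) / s) (at s)"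
      using lagrange_identity_has_vector_derivative[where u = psiB and u' = psiB' and u'' = "psiB'' s"
          and \<phi> = psiA and \<phi>' = psiA' and \<phi>'' = "psiA'' s" and V = "Vpot 1 s" and t = s]
        psiA_has_real_derivative[OF s] psiA'_has_real_derivative[OF s]
        psiB_has_real_derivative psiB'_has_real_derivative s
      by (simp add: W_def[abs_def] has_real_derivative_iff_has_vector_derivative)
    then show "(W has_vector_derivative (psiA s * LpsiB s - psiB s * LpsiA s) / s) (at s)"
      by (simp add: LpsiA_def LpsiB_def algebra_simps)
    show "isCont (\<lambda>s. (psiA s * LpsiB s - psiB s * LpsiA s) / s) s"
      using s continuous_on_psi continuous_on_Lpsi
      by (intro continuous_intros) (auto simp: continuous_on_eq_continuous_at)
  next
    have "einterval (ereal 1) \<infinity> = {1<..}"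
      by (auto simp: einterval_def)
    then show "set_integrable lborel (einterval (ereal 1) \<infinity>) (\<lambda>s. (psiA s * LpsiB s - psiB s * LpsiA s) / s)"
      using set_integrable_Lpsi_psi_Im by simp
    have "(W \<longlongrightarrow> exp (- 2)) (at_right 1)"
      unfolding W_def psi_defs by real_asymp (simp add: mult_exp_exp)
    then show "((W \<circ> real_of_ereal) \<longlongrightarrow> exp (- 2)) (at_right (ereal 1))"
      by (simp add: ereal_tendsto_simps1(2))
    have "(W \<longlongrightarrow> 0) at_top"
      unfolding W_def psi_defs by real_asymp
    then show "((W \<circ> real_of_ereal) \<longlongrightarrow> 0) (at_left \<infinity>)"
      by (simp add: ereal_tendsto_simps1(3))
  qed simp
  moreover have "einterval (ereal 1) \<infinity> = {1<..}"
    by (auto simp: einterval_def)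
  ultimately show ?thesis
    by (simp add: interval_lebesgue_integral_def)
qed

definition psi :: "real \<Rightarrow> complex" where
  "psi s = complex_of_real (psiA s) + \<i> * complex_of_real (psiB s)"
definition Lpsi :: "real \<Rightarrow> complex" where
  "Lpsi s = complex_of_real (LpsiA s) + \<i> * complex_of_real (LpsiB s)"

definition psi' :: "real \<Rightarrow> complex" where
  "psi' s = complex_of_real (psiA' s) + \<i> * complex_of_real (psiB' s)"
definition psi'' :: "real \<Rightarrow> complex" where
  "psi'' s = complex_of_real (psiA'' s) + \<i> * complex_of_real (psiB'' s)"

lemma psi_has_vector_derivative: "s > 1 \<Longrightarrow> (psi has_vector_derivative psi' s) (at s)"
  and psi'_has_vector_derivative: "s > 1 \<Longrightarrow> (psi' has_vector_derivative psi'' s) (at s)"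
  unfolding psi_def psi'_def psi''_def
  by (auto intro!: derivative_eq_intros psiA_has_real_derivative psiA'_has_real_derivative
      psiB_has_real_derivative psiB'_has_real_derivative)

lemma Lpsi_eq: "Lpsi s = psi'' s - psi' s / complex_of_real s + complex_of_real (Vpot 1 s) * psi s"
  by (simp add: complex_eq_iff Lpsi_def psi_def psi'_def psi''_def LpsiA_def LpsiB_def)

text \<open>\<open>DexPsi n\<close> is \<open>Dex n\<close> applied formally to \<open>Psi n\<close>, see \<open>cnj_DexPsi_eq\<close> and \<open>Vpot_dilate\<close>.\<close>

definition Psi :: "nat \<Rightarrow> real \<times> real \<Rightarrow> complex" where
  "Psi n p = psi (real n * fst p)"
definition DexPsi :: "nat \<Rightarrow> real \<times> real \<Rightarrow> complex" where
  "DexPsi n p = complex_of_real ((real n)\<^sup>2) * Lpsi (real n * fst p)"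

lemma borel_measurable_psi [measurable]: "psi \<in> borel_measurable borel" "Lpsi \<in> borel_measurable borel"
  unfolding psi_def Lpsi_def psi_defs by measurable

lemma Psi_in_L2: "n \<ge> 1 \<Longrightarrow> Psi n \<in> L2 n"
  using radial_in_L2[of n psi] set_integrable_psi_norm
  by (simp add: Psi_def[abs_def] psi_def cmod_power2)

lemma DexPsi_in_L2:
  assumes n: "n \<ge> 1" shows "DexPsi n \<in> L2 n"
proof -
  have "(cmod (complex_of_real ((real n)\<^sup>2) * Lpsi s))\<^sup>2 = (real n) ^ 4 * (cmod (Lpsi s))\<^sup>2" for s
    by (simp only: norm_mult norm_of_real power_mult_distrib) simp
  then have "(\<lambda>s. (cmod (complex_of_real ((real n)\<^sup>2) * Lpsi s))\<^sup>2 / s)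
      = (\<lambda>s. (real n) ^ 4 * ((LpsiA s ^ 2 + LpsiB s ^ 2) / s))"
    by (simp add: Lpsi_def cmod_power2)
  then have "set_integrable lborel {1<..} (\<lambda>s. (cmod (complex_of_real ((real n)\<^sup>2) * Lpsi s))\<^sup>2 / s)"
    using set_integrable_mult_right[OF set_integrable_Lpsi_norm] by simp
  from radial_in_L2[OF n _ this] show ?thesis
    unfolding DexPsi_def[abs_def] by measurable
qed

lemma Im_l2_inner_DexPsi_Psi:
  assumes n: "n \<ge> 1"
  shows "Im (l2_inner n (DexPsi n) (Psi n)) = - 2 * pi * (real n)\<^sup>2 * exp (- 2)"
proof -
  define R where "R s = (real n)\<^sup>2 * ((LpsiA s * psiA s + LpsiB s * psiB s) / s)" for s
  define J where "J s = (real n)\<^sup>2 * ((psiA s * LpsiB s - psiB s * LpsiA s) / s)" for s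
  have integrand: "complex_of_real ((real n)\<^sup>2) * Lpsi s * cnj (psi s) / complex_of_real s
      = complex_of_real (R s) + \<i> * complex_of_real (J s)" for s
    by (simp add: complex_eq_iff R_def J_def psi_def Lpsi_def field_simps)
  have int_R: "set_integrable lborel {1<..} (\<lambda>s. complex_of_real (R s))"
    unfolding complex_of_real_set_integrable_eq R_def
    by (rule set_integrable_mult_right[OF set_integrable_Lpsi_psi_Re])
  have int_J: "set_integrable lborel {1<..} (\<lambda>s. \<i> * complex_of_real (J s))"
    unfolding J_def
    by (intro set_integrable_mult_right iffD2[OF complex_of_real_set_integrable_eq] set_integrable_Lpsi_psi_Im)
  have "l2_inner n (DexPsi n) (Psi n) = complex_of_real (2 * pi)
      * (LINT s:{1<..}|lborel. complex_of_real ((real n)\<^sup>2) * Lpsi s * cnj (psi s) / complex_of_real s)"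
    unfolding DexPsi_def[abs_def] Psi_def[abs_def]
    by (rule l2_inner_radial[OF n]) (unfold integrand, rule set_integral_add(1)[OF int_R int_J])
  also have "\<dots> = complex_of_real (2 * pi)
      * (LINT s:{1<..}|lborel. complex_of_real (R s) + \<i> * complex_of_real (J s))"
    unfolding integrand ..
  also have "\<dots> = complex_of_real (2 * pi)
      * (complex_of_real (LINT s:{1<..}|lborel. R s) + \<i> * complex_of_real (LINT s:{1<..}|lborel. J s))"
    by (simp add: set_integral_add(2)[OF int_R int_J] set_integral_complex_of_real)
  also have "(LINT s:{1<..}|lborel. J s) = (real n)\<^sup>2 * (- exp (- 2))"
    unfolding J_def by (subst set_integral_mult_right) (simp only: wronskian_psi_integral)
  finally show ?thesis
    by simp
qed

lemma cnj_psi_dilate_has_vector_derivative: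
  assumes t: "real n * t > 1"
  shows "((\<lambda>t. cnj (psi (real n * t))) has_vector_derivative
      complex_of_real (real n) * cnj (psi' (real n * t))) (at t)"
    and "((\<lambda>t. complex_of_real (real n) * cnj (psi' (real n * t))) has_vector_derivative
      complex_of_real ((real n)\<^sup>2) * cnj (psi'' (real n * t))) (at t)"
proof -
  show "((\<lambda>t. cnj (psi (real n * t))) has_vector_derivative
      complex_of_real (real n) * cnj (psi' (real n * t))) (at t)"
    by (rule has_vector_derivative_cnj_dilate[OF psi_has_vector_derivative[OF t]])
  show "((\<lambda>t. complex_of_real (real n) * cnj (psi' (real n * t))) has_vector_derivative
      complex_of_real ((real n)\<^sup>2) * cnj (psi'' (real n * t))) (at t)"
    using has_vector_derivative_mult_right[OF has_vector_derivative_cnj_dilate[OF psi'_has_vector_derivative[OF t]],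
        of "complex_of_real (real n)"]
    by (simp add: power2_eq_square mult.assoc)
qed

lemma cnj_DexPsi_eq:
  assumes n: "n \<ge> 1" and x: "x \<noteq> 0"
  shows "cnj (DexPsi n (x, y)) = complex_of_real ((real n)\<^sup>2) * cnj (psi'' (real n * x))
    - complex_of_real (real n) * cnj (psi' (real n * x)) / complex_of_real x
    + complex_of_real (Vpot n x) * cnj (psi (real n * x))"
proof -
  have field_identity: "N\<^sup>2 * (P2 - P1 / (N * X) + W * P) = N\<^sup>2 * P2 - N * P1 / X + N\<^sup>2 * W * P"
    if "N \<noteq> 0" "X \<noteq> 0" for N X P P1 P2 W :: complex
    using that by (simp add: field_simps power2_eq_square)
  have "cnj (DexPsi n (x, y)) = complex_of_real ((real n)\<^sup>2) * (cnj (psi'' (real n * x))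
      - cnj (psi' (real n * x)) / complex_of_real (real n * x) + complex_of_real (Vpot 1 (real n * x)) * cnj (psi (real n * x)))"
    by (simp add: DexPsi_def Lpsi_eq)
  also have "\<dots> = complex_of_real ((real n)\<^sup>2) * cnj (psi'' (real n * x))
    - complex_of_real (real n) * cnj (psi' (real n * x)) / complex_of_real x
    + complex_of_real ((real n)\<^sup>2 * Vpot 1 (real n * x)) * cnj (psi (real n * x))"
    unfolding of_real_mult of_real_power by (rule field_identity) (use n x in auto)
  also have "complex_of_real ((real n)\<^sup>2 * Vpot 1 (real n * x)) = complex_of_real (Vpot n x)"
    using Vpot_dilate[of n x] n by simp
  finally show ?thesis .
qed

section \<open>Green's formula for test functions\<close>

lemma smooth2_pd_differentiable: "smooth2 g \<Longrightarrow> pd ws g differentiable (at p)"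
  unfolding smooth2_def by blast

lemma smooth2_pd_continuous: "smooth2 g \<Longrightarrow> continuous_on UNIV (pd ws g)"
  by (intro continuous_at_imp_continuous_on ballI differentiable_imp_continuous_within
      smooth2_pd_differentiable)

lemma smooth2_pd_measurable: "smooth2 g \<Longrightarrow> pd ws g \<in> borel_measurable borel"
  by (rule borel_measurable_continuous_onI[OF smooth2_pd_continuous])

lemma pdx_has_vector_derivative:
  assumes "h differentiable (at (x, y))"
  shows "((\<lambda>t. h (t, y)) has_vector_derivative pdx h (x, y)) (at x)"
proof -
  have "(\<lambda>t. (t, y)) differentiable (at x)"
    by (auto intro!: derivative_eq_intros differentiableI)
  with assms have "(\<lambda>t. h (t, y)) differentiable (at x)"
    using differentiable_chain_at[of "\<lambda>t. (t, y)" x h] by (simp add: o_def)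
  then show ?thesis
    unfolding pdx_def by (simp add: vector_derivative_works)
qed

lemma pdy_has_vector_derivative:
  assumes "h differentiable (at (x, y))"
  shows "((\<lambda>t. h (x, t)) has_vector_derivative pdy h (x, y)) (at y)"
proof -
  have "(\<lambda>t. (x, t)) differentiable (at y)"
    by (auto intro!: derivative_eq_intros differentiableI)
  with assms have "(\<lambda>t. h (x, t)) differentiable (at y)"
    using differentiable_chain_at[of "\<lambda>t. (x, t)" y h] by (simp add: o_def)
  then show ?thesis
    unfolding pdy_def by (simp add: vector_derivative_works)
qed

lemma pd_eq_0_outside:
  assumes h: "\<And>x y. x \<notin> {a..b} \<Longrightarrow> h (x, y) = 0" and x: "x \<notin> {a..b}"
  shows "pd ws h (x, y) = 0"
  using x
proof (induction ws arbitrary: x y)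
  case Nil
  then show ?case using h by simp
next
  case (Cons w ws)
  have "((\<lambda>t. pd ws h (t, y)) has_vector_derivative 0) (at x)"
  proof (rule has_vector_derivative_transform_within_open[where S = "- {a..b}"])
    show "((\<lambda>t. 0) has_vector_derivative 0) (at x)"
      by (rule has_vector_derivative_const)
  qed (use Cons in auto)
  moreover have "(\<lambda>t. pd ws h (x, t)) = (\<lambda>t. 0)"
    using Cons by auto
  ultimately show ?case
    by (auto simp: pdx_def pdy_def vector_derivative_at)
qed

lemma pdy_periodic:
  assumes d: "\<And>p. h differentiable (at p)" and per: "\<And>x y. h (x, y + 2*pi) = h (x, y)"
  shows "pdy h (x, y + 2*pi) = pdy h (x, y)"
proof -
  have "((\<lambda>t. t - 2*pi) has_vector_derivative 1) (at (y + 2*pi))"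
    by (auto intro!: derivative_eq_intros)
  then have "((\<lambda>t. h (x, t)) \<circ> (\<lambda>t. t - 2*pi) has_vector_derivative 1 *\<^sub>R pdy h (x, y)) (at (y + 2*pi))"
    by (rule vector_diff_chain_at) (simp add: pdy_has_vector_derivative[OF d])
  moreover have "(\<lambda>t. h (x, t)) \<circ> (\<lambda>t. t - 2*pi) = (\<lambda>t. h (x, t))"
    using per[of x "_ - 2*pi"] by (auto simp: o_def)
  ultimately show ?thesis
    unfolding pdy_def by (simp add: vector_derivative_at)
qed

lemma test_fun_vanishes_outside:
  assumes "test_fun n g"
  obtains a b where "1 / real n < a" "a < b" "\<And>ws x y. x \<notin> {a<..<b} \<Longrightarrow> pd ws g (x, y) = 0"
proof -
  obtain a b where a: "1 / real n < a" and g: "\<And>x y. x \<notin> {a..b} \<Longrightarrow> g (x, y) = 0"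
    using assms unfolding test_fun_def by blast
  define a' where "a' = (1 / real n + a) / 2"
  have sub: "{a..b} \<subseteq> {a'<..<max a b + 1}"
    using a by (auto simp: a'_def)
  show ?thesis
  proof (rule that)
    show "1 / real n < a'" "a' < max a b + 1"
      using a by (auto simp: a'_def)
    fix ws x y assume "x \<notin> {a'<..<max a b + 1}"
    then have "x \<notin> {a..b}"
      using sub by auto
    with g show "pd ws g (x, y) = 0"
      by (rule pd_eq_0_outside)
  qed
qed

lemma set_integral_Omega_eq_integral_cbox:
  fixes F :: "real \<times> real \<Rightarrow> complex"
  assumes a: "1 / real n < a" and cont: "continuous_on (cbox (a, 0) (b, 2*pi)) F"
    and [measurable]: "F \<in> borel_measurable borel"
    and F: "\<And>x y. x \<notin> {a..b} \<Longrightarrow> F (x, y) = 0"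
  shows "(LINT p:Omega n|lborel. F p) = integral (cbox (a, 0) (b, 2*pi)) F"
proof -
  define K where "K = cbox (a, 0) (b, 2*pi)"
  have [measurable]: "Omega n \<in> sets borel"
    using sets_Omega[of n] by (simp only: lborel_prod sets_lborel)
  have [measurable]: "K \<in> sets borel"
    unfolding K_def by (simp add: borel_closed)
  text \<open>The two domains differ only on the line \<open>y = 2\<pi>\<close>, where \<open>Omega\<close> is half-open.\<close>
  have "AE p in lborel. indicator (Omega n) p *\<^sub>R F p = indicator K p *\<^sub>R F p"
  proof (rule AE_I')
    have "UNIV \<times> {2*pi} \<in> null_sets (lborel \<Otimes>\<^sub>M (lborel :: real measure))"
      by (intro lborel.times_in_null_sets2) auto
    then show "UNIV \<times> {2*pi} \<in> null_sets lborel"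
      by (simp add: lborel_prod)
    show "{p \<in> space lborel. indicator (Omega n) p *\<^sub>R F p \<noteq> indicator K p *\<^sub>R F p} \<subseteq> UNIV \<times> {2*pi}"
    proof
      fix p assume "p \<in> {p \<in> space lborel. indicator (Omega n) p *\<^sub>R F p \<noteq> indicator K p *\<^sub>R F p}"
      then have ne: "indicator (Omega n) p *\<^sub>R F p \<noteq> indicator K p *\<^sub>R F p"
        by simp
      obtain x y where p: "p = (x, y)"
        by fastforce
      have "x \<in> {a..b}"
        using ne F p by (metis scaleR_zero_right)
      then have "y = 2*pi"
        using ne a p by (auto simp: Omega_def K_def cbox_Pair_eq indicator_def of_bool_def split: if_splits)
      then show "p \<in> UNIV \<times> {2*pi}"
        using p by simp
    qed
  qed
  then have "(LINT p:Omega n|lborel. F p) = (LINT p:K|lborel. F p)"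
    unfolding set_lebesgue_integral_def by (intro integral_cong_AE) measurable
  also have "\<dots> = integral K F"
    using borel_integrable_compact[OF _ cont] unfolding K_def set_integrable_def
    by (intro set_borel_integral_eq_integral(2)) (auto simp: set_integrable_def)
  finally show ?thesis
    unfolding K_def .
qed

lemma integral_cbox_mult_pdy_pdy_eq_0:
  fixes c :: "real \<Rightarrow> complex"
  assumes g: "smooth2 g" and per: "\<And>x y. g (x, y + 2*pi) = g (x, y)"
    and cont: "continuous_on (cbox (a, 0) (b, 2*pi)) (\<lambda>p. c (fst p) * pdy (pdy g) p)"
  shows "integral (cbox (a, 0) (b, 2*pi)) (\<lambda>p. c (fst p) * pdy (pdy g) p) = 0"
proof -
  have inner: "integral {0..2*pi} (\<lambda>y. c x * pdy (pdy g) (x, y)) = 0" for x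
  proof -
    have "((\<lambda>y. pdy (pdy g) (x, y)) has_integral pdy g (x, 2*pi) - pdy g (x, 0)) {0..2*pi}"
    proof (rule fundamental_theorem_of_calculus[where f = "\<lambda>y. pdy g (x, y)"])
      fix y :: real
      show "((\<lambda>y. pdy g (x, y)) has_vector_derivative pdy (pdy g) (x, y)) (at y within {0..2*pi})"
        using smooth2_pd_differentiable[OF g, of "[False]"]
        by (intro has_vector_derivative_at_within[OF pdy_has_vector_derivative]) simp
    qed simp
    then have "((\<lambda>y. pdy (pdy g) (x, y)) has_integral 0) {0..2*pi}"
      using pdy_periodic[of g, OF _ per, of x 0] smooth2_pd_differentiable[OF g, of "[]"] by simp
    then have "((\<lambda>y. c x * pdy (pdy g) (x, y)) has_integral c x * 0) {0..2*pi}"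
      by (rule has_integral_mult_right)
    then have "((\<lambda>y. c x * pdy (pdy g) (x, y)) has_integral 0) {0..2*pi}"
      by simp
    then show ?thesis
      by (rule integral_unique)
  qed
  then show ?thesis
    using integral_prod_continuous[OF cont] by (simp only: fst_conv cbox_interval inner integral_0)
qed

lemma integral_cbox_lagrange_form_eq_0:
  fixes \<phi> \<phi>' \<phi>'' V :: "real \<Rightarrow> complex" and g :: "real \<times> real \<Rightarrow> complex"
  assumes ab: "a \<le> b" "0 \<notin> {a..b}" and g: "smooth2 g"
    and ends: "\<And>y. g (a, y) = 0" "\<And>y. pdx g (a, y) = 0" "\<And>y. g (b, y) = 0" "\<And>y. pdx g (b, y) = 0"
    and \<phi>: "\<And>t. t \<in> {a..b} \<Longrightarrow> (\<phi> has_vector_derivative \<phi>' t) (at t)"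
      "\<And>t. t \<in> {a..b} \<Longrightarrow> (\<phi>' has_vector_derivative \<phi>'' t) (at t)"
    and cont: "continuous_on (cbox (a, 0) (b, 2*pi)) (\<lambda>p.
      ((pdx (pdx g) p - pdx g p / of_real (fst p) + V (fst p) * g p) * \<phi> (fst p)
       - g p * (\<phi>'' (fst p) - \<phi>' (fst p) / of_real (fst p) + V (fst p) * \<phi> (fst p))) / of_real (fst p))"
  shows "integral (cbox (a, 0) (b, 2*pi)) (\<lambda>p.
      ((pdx (pdx g) p - pdx g p / of_real (fst p) + V (fst p) * g p) * \<phi> (fst p)
       - g p * (\<phi>'' (fst p) - \<phi>' (fst p) / of_real (fst p) + V (fst p) * \<phi> (fst p))) / of_real (fst p)) = 0"
    (is "integral _ ?F = 0")
proof -
  have "integral (cbox (a, 0) (b, 2*pi)) ?F = integral (cbox a b) (\<lambda>x. integral (cbox 0 (2*pi)) (\<lambda>y. ?F (x, y)))"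
    by (rule integral_prod_continuous[OF cont])
  also have "\<dots> = integral (cbox 0 (2*pi)) (\<lambda>y. integral (cbox a b) (\<lambda>x. ?F (x, y)))"
    by (rule integral_swap_continuous) (use cont in \<open>simp add: split_def\<close>)
  also have "\<dots> = 0"
  proof -
    have "((\<lambda>x. ((pdx (pdx g) (x, y) - pdx g (x, y) / of_real x + V x * g (x, y)) * \<phi> x
        - g (x, y) * (\<phi>'' x - \<phi>' x / of_real x + V x * \<phi> x)) / of_real x) has_integral 0) {a..b}" for y
    proof (rule lagrange_form_has_integral_0[where u = "\<lambda>t. g (t, y)" and u' = "\<lambda>t. pdx g (t, y)"])
      fix t
      show "((\<lambda>t. g (t, y)) has_vector_derivative pdx g (t, y)) (at t)"
        using smooth2_pd_differentiable[OF g, of "[]"] by (intro pdx_has_vector_derivative) simp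
      show "((\<lambda>t. pdx g (t, y)) has_vector_derivative pdx (pdx g) (t, y)) (at t)"
        using smooth2_pd_differentiable[OF g, of "[True]"] by (intro pdx_has_vector_derivative) simp
    qed (use ab ends \<phi> in auto)
    then have "integral {a..b} (\<lambda>x. ((pdx (pdx g) (x, y) - pdx g (x, y) / of_real x + V x * g (x, y)) * \<phi> x
        - g (x, y) * (\<phi>'' x - \<phi>' x / of_real x + V x * \<phi> x)) / of_real x) = 0" for y
      by (rule integral_unique)
    then show ?thesis
      by (simp add: cbox_interval)
  qed
  finally show ?thesis .
qed

text \<open>The first summand is the Lagrange form of the radial part of \<open>Dex n\<close>; the second integrates
  to zero in \<open>y\<close> by periodicity.\<close>

lemma Dex_green_integrand:
  fixes g :: "real \<times> real \<Rightarrow> complex" and \<psi> \<psi>' :: "real \<times> real \<Rightarrow> complex"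
  assumes x: "x > 0"
  shows "Dex n g (x, y) * \<psi> (x, y) / complex_of_real \<bar>x\<bar> - g (x, y) * \<psi>' (x, y) / complex_of_real \<bar>x\<bar>
    = ((pdx (pdx g) (x, y) - pdx g (x, y) / complex_of_real x + complex_of_real (Vpot n x) * g (x, y)) * \<psi> (x, y)
       - g (x, y) * \<psi>' (x, y)) / complex_of_real x
      + complex_of_real x * \<psi> (x, y) * pdy (pdy g) (x, y)"
proof -
  have field_identity: "(A + X\<^sup>2 * Y - 1 / X * B + V * G) * P / X - G * Q / X
      = ((A - B / X + V * G) * P - G * Q) / X + X * P * Y" if "X \<noteq> 0" for A B G Y P Q V X :: complex
    using that by (simp add: field_simps power2_eq_square)
  show ?thesis
    unfolding Dex_def case_prod_conv abs_of_pos[OF x] of_real_power of_real_divide of_real_1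
    by (rule field_identity) (use x in simp)
qed

lemma borel_measurable_Dex:
  assumes g: "smooth2 g" shows "Dex n g \<in> borel_measurable lborel"
proof -
  have [measurable]: "pd ws g \<in> borel_measurable (lborel \<Otimes>\<^sub>M lborel)" for ws
    using smooth2_pd_measurable[OF g] by (simp add: lborel_prod)
  have [measurable]: "Vpot n \<in> borel_measurable borel"
    unfolding Vpot_def by measurable
  have "(\<lambda>p. pd [True, True] g p + complex_of_real ((fst p)\<^sup>2) * pd [False, False] g p
      - complex_of_real (1 / fst p) * pd [True] g p + complex_of_real (Vpot n (fst p)) * pd [] g p)
      \<in> borel_measurable (lborel \<Otimes>\<^sub>M lborel)"
    by measurable
  then show ?thesis
    by (simp add: Dex_def split_def lborel_prod)
qed

lemma continuous_on_Vpot: "n \<ge> 1 \<Longrightarrow> continuous_on {1 / real n<..} (Vpot n)"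
proof -
  assume n: "n \<ge> 1"
  have "continuous_on {1 / real n<..} (\<lambda>x. (real n)\<^sup>2 * Vpot 1 (real n * x))"
    using n by (intro continuous_intros continuous_on_compose2[OF continuous_on_Vpot_1]) (auto simp: field_simps)
  moreover have "Vpot n x = (real n)\<^sup>2 * Vpot 1 (real n * x)" for x
    using n by (intro Vpot_dilate) simp
  ultimately show ?thesis
    by simp
qed

lemma continuous_on_Dex:
  assumes n: "n \<ge> 1" and g: "smooth2 g"
  shows "continuous_on {p. 1 / real n < fst p} (Dex n g)"
proof -
  have pos: "fst p \<noteq> 0" if "p \<in> {p. 1 / real n < fst p}" for p
    using that n by (auto simp: field_simps)
  have "continuous_on {p. 1 / real n < fst p} (\<lambda>p. Vpot n (fst p))"
    by (rule continuous_on_compose2[OF continuous_on_Vpot[OF n]]) (auto intro!: continuous_intros)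
  moreover note smooth2_pd_continuous[OF g, of "[True, True]"] smooth2_pd_continuous[OF g, of "[False, False]"]
    smooth2_pd_continuous[OF g, of "[True]"] smooth2_pd_continuous[OF g, of "[]"]
  ultimately show ?thesis
    unfolding Dex_def split_def using pos
    by (auto intro!: continuous_intros intro: continuous_on_subset)
qed

lemma continuous_on_cnj_Psi:
  assumes n: "n \<ge> 1"
  shows "continuous_on {p. 1 / real n < fst p} (\<lambda>p. cnj (Psi n p))"
    and "continuous_on {p. 1 / real n < fst p} (\<lambda>p. cnj (DexPsi n p))"
proof -
  have img: "(\<lambda>p. real n * fst p) ` {p. 1 / real n < fst p} \<subseteq> {1<..}"
    using n by (auto simp: field_simps)
  have "continuous_on {1<..} psi" "continuous_on {1<..} Lpsi"
    unfolding psi_def Lpsi_def using continuous_on_psi continuous_on_Lpsi by (auto intro!: continuous_intros)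
  then have "continuous_on {p. 1 / real n < fst p} (\<lambda>p. psi (real n * fst p))"
    "continuous_on {p. 1 / real n < fst p} (\<lambda>p. Lpsi (real n * fst p))"
    by (auto intro!: continuous_on_compose2[OF _ _ img] continuous_intros)
  then show "continuous_on {p. 1 / real n < fst p} (\<lambda>p. cnj (Psi n p))"
    "continuous_on {p. 1 / real n < fst p} (\<lambda>p. cnj (DexPsi n p))"
    unfolding Psi_def DexPsi_def by (auto intro!: continuous_intros)
qed

lemma continuous_on_Dex_green_terms:
  assumes n: "n \<ge> 1" and g: "smooth2 g"
  shows "continuous_on {p. 1 / real n < fst p} (\<lambda>p. Dex n g p * cnj (Psi n p))"
    and "continuous_on {p. 1 / real n < fst p} (\<lambda>p. g p * cnj (DexPsi n p))"
proof -
  have "continuous_on {p. 1 / real n < fst p} g"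
    using continuous_on_subset[OF smooth2_pd_continuous[OF g, of "[]"]] by simp
  then show "continuous_on {p. 1 / real n < fst p} (\<lambda>p. Dex n g p * cnj (Psi n p))"
    "continuous_on {p. 1 / real n < fst p} (\<lambda>p. g p * cnj (DexPsi n p))"
    using continuous_on_Dex[OF n g] continuous_on_cnj_Psi[OF n] by (auto intro: continuous_on_mult)
qed

lemma l2_inner_eq_integral_cbox:
  assumes a: "1 / real n < a" and [measurable]: "u \<in> borel_measurable borel" "v \<in> borel_measurable borel"
    and cont: "continuous_on {p. 1 / real n < fst p} (\<lambda>p. u p * cnj (v p))"
    and u: "\<And>x y. x \<notin> {a..b} \<Longrightarrow> u (x, y) = 0"
  shows "l2_inner n u v = integral (cbox (a, 0) (b, 2*pi)) (\<lambda>p. u p * cnj (v p) / complex_of_real \<bar>fst p\<bar>)"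
  unfolding l2_inner_def
proof (rule set_integral_Omega_eq_integral_cbox[OF a])
  have "cbox (a, 0) (b, 2*pi) \<subseteq> {p. 1 / real n < fst p}" "\<And>p. 1 / real n < fst p \<Longrightarrow> fst p \<noteq> 0"
    using a by (auto simp: cbox_Pair_eq)
  then show "continuous_on (cbox (a, 0) (b, 2*pi)) (\<lambda>p. u p * cnj (v p) / complex_of_real \<bar>fst p\<bar>)"
    by (intro continuous_intros continuous_on_subset[OF cont]) auto
  have [measurable]: "u \<in> borel_measurable (lborel \<Otimes>\<^sub>M lborel)" "v \<in> borel_measurable (lborel \<Otimes>\<^sub>M lborel)"
    by (simp_all add: lborel_prod)
  have "(\<lambda>p. u p * cnj (v p) / complex_of_real \<bar>fst p\<bar>) \<in> borel_measurable (lborel \<Otimes>\<^sub>M lborel)"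
    by measurable
  then show "(\<lambda>p. u p * cnj (v p) / complex_of_real \<bar>fst p\<bar>) \<in> borel_measurable borel"
    by (simp add: lborel_prod)
qed (use u in simp)

lemma continuous_on_Dex_lagrange_form:
  assumes n: "n \<ge> 1" and g: "smooth2 g"
  shows "continuous_on {p. 1 / real n < fst p} (\<lambda>p.
    ((pdx (pdx g) p - pdx g p / complex_of_real (fst p) + complex_of_real (Vpot n (fst p)) * g p) * cnj (Psi n p)
      - g p * cnj (DexPsi n p)) / complex_of_real (fst p))"
proof -
  have "continuous_on {p. 1 / real n < fst p} (\<lambda>p. Vpot n (fst p))"
    by (rule continuous_on_compose2[OF continuous_on_Vpot[OF n]]) (auto intro!: continuous_intros)
  moreover have "fst p \<noteq> 0" if "1 / real n < fst p" for p
    using that order.strict_trans1[of 0 "1 / real n"] by auto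
  ultimately show ?thesis
    using continuous_on_cnj_Psi[OF n] smooth2_pd_continuous[OF g, of "[True, True]"]
      smooth2_pd_continuous[OF g, of "[True]"] smooth2_pd_continuous[OF g, of "[]"]
    by (auto intro!: continuous_intros intro: continuous_on_subset)
qed

lemma integral_cbox_Dex_lagrange_form_eq_0:
  assumes n: "n \<ge> 1" and g: "smooth2 g" and ab: "1 / real n < a" "a \<le> b"
    and ends: "\<And>y. g (a, y) = 0" "\<And>y. pdx g (a, y) = 0" "\<And>y. g (b, y) = 0" "\<And>y. pdx g (b, y) = 0"
  shows "integral (cbox (a, 0) (b, 2*pi)) (\<lambda>p.
    ((pdx (pdx g) p - pdx g p / complex_of_real (fst p) + complex_of_real (Vpot n (fst p)) * g p) * cnj (Psi n p)
      - g p * cnj (DexPsi n p)) / complex_of_real (fst p)) = 0"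
    (is "integral ?K ?L = 0")
proof -
  define \<phi> where "\<phi> t = cnj (psi (real n * t))" for t
  define \<phi>' where "\<phi>' t = complex_of_real (real n) * cnj (psi' (real n * t))" for t
  define \<phi>'' where "\<phi>'' t = complex_of_real ((real n)\<^sup>2) * cnj (psi'' (real n * t))" for t
  define V where "V t = complex_of_real (Vpot n t)" for t
  have K: "?K \<subseteq> {p. 1 / real n < fst p}" and a: "0 < a"
    using ab order.strict_trans1[of 0 "1 / real n" a] by (auto simp: cbox_Pair_eq)
  have eq: "?L p = ((pdx (pdx g) p - pdx g p / of_real (fst p) + V (fst p) * g p) * \<phi> (fst p)
      - g p * (\<phi>'' (fst p) - \<phi>' (fst p) / of_real (fst p) + V (fst p) * \<phi> (fst p))) / of_real (fst p)"
    if "p \<in> ?K" for p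
    using cnj_DexPsi_eq[OF n, of "fst p" "snd p"] that a
    by (auto simp: cbox_Pair_eq Psi_def V_def \<phi>_def \<phi>'_def \<phi>''_def)
  have "integral ?K (\<lambda>p. ((pdx (pdx g) p - pdx g p / of_real (fst p) + V (fst p) * g p) * \<phi> (fst p)
      - g p * (\<phi>'' (fst p) - \<phi>' (fst p) / of_real (fst p) + V (fst p) * \<phi> (fst p))) / of_real (fst p)) = 0"
  proof (rule integral_cbox_lagrange_form_eq_0[OF ab(2) _ g ends])
    show "0 \<notin> {a..b}"
      using a by auto
    fix t assume "t \<in> {a..b}"
    then have "1 / real n < t"
      using ab(1) by auto
    then have "real n * t > 1"
      using n by (simp add: field_simps)
    then show "(\<phi> has_vector_derivative \<phi>' t) (at t)" "(\<phi>' has_vector_derivative \<phi>'' t) (at t)"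
      unfolding \<phi>_def \<phi>'_def \<phi>''_def by (rule cnj_psi_dilate_has_vector_derivative)+
  next
    show "continuous_on ?K (\<lambda>p. ((pdx (pdx g) p - pdx g p / of_real (fst p) + V (fst p) * g p) * \<phi> (fst p)
      - g p * (\<phi>'' (fst p) - \<phi>' (fst p) / of_real (fst p) + V (fst p) * \<phi> (fst p))) / of_real (fst p))"
      using continuous_on_subset[OF continuous_on_Dex_lagrange_form[OF n g] K] eq
      by (simp cong: continuous_on_cong)
  qed
  moreover have "integral ?K ?L = integral ?K (\<lambda>p. ((pdx (pdx g) p - pdx g p / of_real (fst p) + V (fst p) * g p) * \<phi> (fst p)
      - g p * (\<phi>'' (fst p) - \<phi>' (fst p) / of_real (fst p) + V (fst p) * \<phi> (fst p))) / of_real (fst p))"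
    using eq by (rule integral_cong)
  ultimately show ?thesis
    by simp
qed

lemma integral_cbox_Dex_green_eq_0:
  assumes n: "n \<ge> 1" and g: "smooth2 g" and per: "\<And>x y. g (x, y + 2*pi) = g (x, y)"
    and ab: "1 / real n < a" "a \<le> b"
    and ends: "\<And>y. g (a, y) = 0" "\<And>y. pdx g (a, y) = 0" "\<And>y. g (b, y) = 0" "\<And>y. pdx g (b, y) = 0"
  shows "integral (cbox (a, 0) (b, 2*pi)) (\<lambda>p. Dex n g p * cnj (Psi n p) / complex_of_real \<bar>fst p\<bar>
    - g p * cnj (DexPsi n p) / complex_of_real \<bar>fst p\<bar>) = 0"
proof -
  define K where "K = cbox (a, 0) (b, 2*pi)"
  define L where "L p = ((pdx (pdx g) p - pdx g p / complex_of_real (fst p) + complex_of_real (Vpot n (fst p)) * g p)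
    * cnj (Psi n p) - g p * cnj (DexPsi n p)) / complex_of_real (fst p)" for p
  define Y where "Y p = complex_of_real (fst p) * cnj (psi (real n * fst p)) * pdy (pdy g) p" for p
  have KU: "K \<subseteq> {p. 1 / real n < fst p}" and pos: "\<And>p. p \<in> K \<Longrightarrow> fst p > 0"
    using ab order.strict_trans1[of 0 "1 / real n" a] by (auto simp: K_def cbox_Pair_eq)
  have cont_L: "continuous_on K L"
    unfolding L_def using continuous_on_Dex_lagrange_form[OF n g] KU by (rule continuous_on_subset)
  have cont_Y: "continuous_on K Y"
    unfolding Y_def using continuous_on_subset[OF continuous_on_cnj_Psi(1)[OF n] KU]
      smooth2_pd_continuous[OF g, of "[False, False]"]
    by (auto simp: Psi_def intro!: continuous_intros intro: continuous_on_subset)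
  have "integral K (\<lambda>p. Dex n g p * cnj (Psi n p) / complex_of_real \<bar>fst p\<bar>
      - g p * cnj (DexPsi n p) / complex_of_real \<bar>fst p\<bar>) = integral K (\<lambda>p. L p + Y p)"
    using Dex_green_integrand[OF pos, where \<psi> = "\<lambda>p. cnj (Psi n p)" and \<psi>' = "\<lambda>p. cnj (DexPsi n p)"]
    by (intro integral_cong) (auto simp: L_def Y_def Psi_def)
  also have "\<dots> = integral K L + integral K Y"
    using cont_L cont_Y unfolding K_def by (intro integral_add integrable_continuous)
  also have "integral K L = 0"
    unfolding K_def L_def by (rule integral_cbox_Dex_lagrange_form_eq_0[OF n g ab ends])
  also have "integral K Y = 0"
    unfolding K_def Y_def by (rule integral_cbox_mult_pdy_pdy_eq_0[OF g per]) (use cont_Y in \<open>simp add: K_def Y_def\<close>)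
  finally show ?thesis
    unfolding K_def by simp
qed

lemma l2_inner_Dex_Psi:
  assumes n: "n \<ge> 1" and g: "test_fun n g"
  shows "l2_inner n (Dex n g) (Psi n) = l2_inner n g (DexPsi n)"
proof -
  have sm: "smooth2 g" and per: "\<And>x y. g (x, y + 2*pi) = g (x, y)"
    using g unfolding test_fun_def by auto
  obtain a b where a: "1 / real n < a" and "a < b" and van: "\<And>ws x y. x \<notin> {a<..<b} \<Longrightarrow> pd ws g (x, y) = 0"
    using test_fun_vanishes_outside[OF g] by metis
  have van_Dex: "Dex n g (x, y) = 0" and van_g: "g (x, y) = 0" if "x \<notin> {a..b}" for x y
    using that van[of x "[True, True]" y] van[of x "[False, False]" y] van[of x "[True]" y] van[of x "[]" y]
    by (auto simp: Dex_def)
  have [measurable]: "Dex n g \<in> borel_measurable borel" "g \<in> borel_measurable borel"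
    using borel_measurable_Dex[OF sm] smooth2_pd_measurable[OF sm, of "[]"] by simp_all
  have [measurable]: "Psi n \<in> borel_measurable borel" "DexPsi n \<in> borel_measurable borel"
    using Psi_in_L2[OF n] DexPsi_in_L2[OF n] by (simp_all add: L2_iff)
  note cont = continuous_on_Dex_green_terms[OF n sm]
  define K where "K = cbox (a, 0) (b, 2*pi)"
  have KU: "K \<subseteq> {p. 1 / real n < fst p}" and pos: "\<And>p. p \<in> K \<Longrightarrow> fst p \<noteq> 0"
    using a order.strict_trans1[of 0 "1 / real n" a] by (auto simp: K_def cbox_Pair_eq)
  have "l2_inner n (Dex n g) (Psi n) = integral K (\<lambda>p. Dex n g p * cnj (Psi n p) / complex_of_real \<bar>fst p\<bar>)"
    unfolding K_def by (rule l2_inner_eq_integral_cbox[OF a _ _ cont(1) van_Dex]) measurable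
  moreover have "l2_inner n g (DexPsi n) = integral K (\<lambda>p. g p * cnj (DexPsi n p) / complex_of_real \<bar>fst p\<bar>)"
    unfolding K_def by (rule l2_inner_eq_integral_cbox[OF a _ _ cont(2) van_g]) measurable
  ultimately have "l2_inner n (Dex n g) (Psi n) - l2_inner n g (DexPsi n)
    = integral K (\<lambda>p. Dex n g p * cnj (Psi n p) / complex_of_real \<bar>fst p\<bar>)
      - integral K (\<lambda>p. g p * cnj (DexPsi n p) / complex_of_real \<bar>fst p\<bar>)"
    by simp
  also have "\<dots> = integral K (\<lambda>p. Dex n g p * cnj (Psi n p) / complex_of_real \<bar>fst p\<bar>
      - g p * cnj (DexPsi n p) / complex_of_real \<bar>fst p\<bar>)"
    using continuous_on_subset[OF cont(1) KU] continuous_on_subset[OF cont(2) KU] pos unfolding K_def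
    by (intro integral_diff[symmetric] integrable_continuous continuous_on_divide) (auto intro!: continuous_intros)
  also have "\<dots> = 0"
    unfolding K_def
    by (rule integral_cbox_Dex_green_eq_0[OF n sm per a]) (use \<open>a < b\<close> van[of _ "[]"] van[of _ "[True]"] in auto)
  finally show ?thesis
    by simp
qed

lemma borel_measurable_Dex_graph:
  assumes "(u, f) \<in> Dex_graph n"
  shows "u \<in> borel_measurable lborel \<and> f \<in> borel_measurable lborel"
proof -
  from assms obtain g where "u = g" "f = Dex n g" "smooth2 g"
    unfolding Dex_graph_def test_fun_def by auto
  then show ?thesis
    using borel_measurable_Dex smooth2_pd_measurable[of g "[]"] by simp
qed

lemma Psi_DexPsi_in_op_adjoint:
  assumes n: "n \<ge> 1"
  shows "(Psi n, DexPsi n) \<in> op_adjoint n (Dex_graph n)"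
proof -
  have "\<forall>(u, f) \<in> Dex_graph n. l2_inner n f (Psi n) = l2_inner n u (DexPsi n)"
    unfolding Dex_graph_def using l2_inner_Dex_Psi[OF n] by auto
  then show ?thesis
    unfolding op_adjoint_def using Psi_in_L2[OF n] DexPsi_in_L2[OF n] by blast
qed

theorem proposition5:
  fixes n :: nat
  assumes "n \<ge> 1"
  shows "\<not> essentially_self_adjoint n (Dex_graph n)"
proof
  assume "essentially_self_adjoint n (Dex_graph n)"
  then have sa: "self_adjoint_op n (op_closure n (Dex_graph n))"
    unfolding essentially_self_adjoint_def .
  have "op_adjoint n (Dex_graph n) \<subseteq> op_adjoint n (op_closure n (Dex_graph n))"
    by (rule op_adjoint_subset_op_adjoint_closure) (rule borel_measurable_Dex_graph)
  with Psi_DexPsi_in_op_adjoint[OF assms]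
  have "(Psi n, DexPsi n) \<in> op_adjoint n (op_closure n (Dex_graph n))"
    by (rule subsetD[rotated])
  then have "(Psi n, DexPsi n) \<in> op_closure n (Dex_graph n)"
    using sa unfolding self_adjoint_op_def by simp
  then have "Im (l2_inner n (DexPsi n) (Psi n)) = 0"
    by (rule self_adjoint_op_inner_real[OF sa])
  then show False
    using Im_l2_inner_DexPsi_Psi[OF assms] assms by simp
qed

end
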